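(* Let $(\mathcal{X},d)$ be a finite metric space $\mathcal{X}=\{x_0,x_1,\dots,x_n\}$ ($n\ge 1$, the $x_i$ pairwise distinct), and let $(\mathcal{Y},\|\cdot\|)$ be a non-trivial, strictly convex real Banach space. Then the set of extreme points of the convex set $\operatorname{Lip}^1_0\subset\mathcal{Y}^{n+1}$ is exactly $\mathcal{E}$, i.e. $\operatorname{ext}(\operatorname{Lip}^1_0)=\mathcal{E}$.
   Context: $\operatorname{Lip}^1_0$ denotes the set of all $y=(y_0,\dots,y_n)\in\mathcal{Y}^{n+1}$ with $y_0=0$ and $\|y_i-y_j\|\le d(x_i,x_j)$ for all $i,j\in\{0,1,\dots,n\}$. An extreme point of a convex set $C$ is a point $y\in C$ such that $y=\lambda y^1+(1-\lambda)y^2$ with $y^1,y^2\in C$, $\lambda\in(0,1)$ implies $y^1=y^2=y$; $\operatorname{ext}(C)$ is the set of extreme points. $\mathcal{E}$ is the set of all $y\in\operatorname{Lip}^1_0$ such that for every $i\in\{1,\dots,n\}$ there exist $k\ge1$ and indices $0=i_0,i_1,\dots,i_k=i$ in $\{0,\dots,n\}$ with $\|y_{i_{j+1}}-y_{i_j}\|=d(x_{i_j},x_{i_{j+1}})$ for every $j=0,\dots,k-1$. *)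

theory Defs
  imports "HOL-Analysis.Analysis"
begin

definition strictly_convex_space :: "'b::real_normed_vector itself \<Rightarrow> bool" where
  "strictly_convex_space _ \<longleftrightarrow>
     (\<forall>u v::'b. norm u = 1 \<and> norm v = 1 \<and> u \<noteq> v \<longrightarrow> norm ((1/2) *\<^sub>R (u + v)) < 1)"

text \<open>Elements of Y^(n+1) are represented as functions nat => Y that vanish outside {0..n}.\<close>
definition Lip10 :: "nat \<Rightarrow> (nat \<Rightarrow> 'a::metric_space) \<Rightarrow> (nat \<Rightarrow> 'b::real_normed_vector) set" where
  "Lip10 n x = {y. y 0 = 0 \<and> (\<forall>i>n. y i = 0) \<and>
      (\<forall>i\<le>n. \<forall>j\<le>n. norm (y i - y j) \<le> dist (x i) (x j))}"

definition ext_pts :: "(nat \<Rightarrow> 'b::real_vector) set \<Rightarrow> (nat \<Rightarrow> 'b) set" where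
  "ext_pts C = {y \<in> C. \<forall>y1\<in>C. \<forall>y2\<in>C. \<forall>l::real. 0 < l \<and> l < 1 \<and>
      y = (\<lambda>i. l *\<^sub>R y1 i + (1 - l) *\<^sub>R y2 i) \<longrightarrow> y1 = y \<and> y2 = y}"

definition E_set :: "nat \<Rightarrow> (nat \<Rightarrow> 'a::metric_space) \<Rightarrow> (nat \<Rightarrow> 'b::real_normed_vector) set" where
  "E_set n x = {y \<in> Lip10 n x. \<forall>i\<in>{1..n}. \<exists>k\<ge>1. \<exists>p::nat \<Rightarrow> nat.
      p 0 = 0 \<and> p k = i \<and> (\<forall>j\<le>k. p j \<le> n) \<and>
      (\<forall>j<k. norm (y (p (Suc j)) - y (p j)) = dist (x (p j)) (x (p (Suc j))))}"

end

theory Submission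
  imports Defs
begin

text \<open>Call the pair \<open>(a, b)\<close> tight for \<open>y\<close> if \<open>\<parallel>y b - y a\<parallel> = d(x a, x b)\<close>.
  If \<open>y = l y\<^sub>1 + (1 - l) y\<^sub>2\<close> with \<open>y\<^sub>1, y\<^sub>2\<close> in \<open>Lip\<^sup>1\<^sub>0\<close>, then on a tight pair the increments
  \<open>y\<^sub>1 b - y\<^sub>1 a\<close> and \<open>y\<^sub>2 b - y\<^sub>2 a\<close> lie in the ball of radius \<open>d(x a, x b)\<close> while their convex
  combination lies on its boundary; strict convexity forces them to coincide. Propagating
  from \<open>y 0 = 0\<close> along tight pairs, \<open>y\<^sub>1\<close> and \<open>y\<^sub>2\<close> agree with \<open>y\<close> at every index reachable
  from \<open>0\<close>, so elements of \<open>\<E>\<close> are extreme. Conversely, if the set \<open>U\<close> of indices not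
  reachable from \<open>0\<close> is nonempty, every pair between \<open>U\<close> and its complement has positive
  slack; translating \<open>y\<close> on \<open>U\<close> by a vector \<open>\<pm>w\<close> shorter than the least slack stays in
  \<open>Lip\<^sup>1\<^sub>0\<close>, and \<open>y\<close> is the midpoint of the two translates.\<close>

inductive tight_reachable ::
  "nat \<Rightarrow> (nat \<Rightarrow> 'a::metric_space) \<Rightarrow> (nat \<Rightarrow> 'b::real_normed_vector) \<Rightarrow> nat \<Rightarrow> bool"
  for n x y where
  tight_reachable_0: "tight_reachable n x y 0"
| tight_reachable_step: "tight_reachable n x y a \<Longrightarrow> b \<le> n \<Longrightarrow>
    norm (y b - y a) = dist (x a) (x b) \<Longrightarrow> tight_reachable n x y b"

lemma tight_reachable_le: "tight_reachable n x y i \<Longrightarrow> i \<le> n"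
  by (induction rule: tight_reachable.induct) auto

lemma tight_reachable_iff_path:
  "tight_reachable n x y i \<longleftrightarrow> (\<exists>k p. p 0 = 0 \<and> p k = i \<and> (\<forall>j\<le>k. p j \<le> n) \<and>
     (\<forall>j<k. norm (y (p (Suc j)) - y (p j)) = dist (x (p j)) (x (p (Suc j)))))"
  (is "_ \<longleftrightarrow> (\<exists>k p. ?path k p i)")
proof
  assume "tight_reachable n x y i"
  then show "\<exists>k p. ?path k p i"
  proof (induction rule: tight_reachable.induct)
    case tight_reachable_0
    show ?case by (rule exI[of _ 0], rule exI[of _ "\<lambda>_. 0"]) simp
  next
    case (tight_reachable_step a b)
    then obtain k p where p: "?path k p a" by blast
    have "?path (Suc k) (p(Suc k := b)) b"
      using p tight_reachable_step.hyps(2,3) by (auto simp: le_Suc_eq less_Suc_eq)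
    then show ?case by blast
  qed
next
  assume "\<exists>k p. ?path k p i"
  then obtain k p where p: "?path k p i" by blast
  have "tight_reachable n x y (p m)" if "m \<le> k" for m
    using that
  proof (induction m)
    case 0
    then show ?case using p tight_reachable_0 by simp
  next
    case (Suc m)
    then show ?case using p by (auto intro: tight_reachable_step)
  qed
  then show "tight_reachable n x y i" using p by blast
qed

lemma E_set_iff:
  "y \<in> E_set n x \<longleftrightarrow> y \<in> Lip10 n x \<and> (\<forall>i\<in>{1..n}. tight_reachable n x y i)"
proof -
  have "(\<exists>k\<ge>1. \<exists>p. p 0 = 0 \<and> p k = i \<and> R k p) \<longleftrightarrow> (\<exists>k p. p 0 = 0 \<and> p k = i \<and> R k p)"
    if "i \<noteq> 0" for i :: nat and R :: "nat \<Rightarrow> (nat \<Rightarrow> nat) \<Rightarrow> bool"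
    using that by (metis less_one not_le)
  then show ?thesis
    unfolding E_set_def tight_reachable_iff_path by (simp add: Ball_def)
qed

lemma strictly_convex_norm_midpoint_less:
  fixes u v :: "'b::real_normed_vector"
  assumes sc: "strictly_convex_space TYPE('b)"
    and "norm u = D" "norm v = D" "u \<noteq> v"
  shows "norm ((1/2) *\<^sub>R (u + v)) < D"
proof -
  have "D > 0" using assms(2-4) by auto
  have "norm ((1/D) *\<^sub>R u) = 1" "norm ((1/D) *\<^sub>R v) = 1" "(1/D) *\<^sub>R u \<noteq> (1/D) *\<^sub>R v"
    using assms \<open>D > 0\<close> by auto
  then have "norm ((1/2) *\<^sub>R ((1/D) *\<^sub>R u + (1/D) *\<^sub>R v)) < 1"
    using sc unfolding strictly_convex_space_def by blast
  also have "(1/2) *\<^sub>R ((1/D) *\<^sub>R u + (1/D) *\<^sub>R v) = (1/D) *\<^sub>R ((1/2) *\<^sub>R (u + v))"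
    by (simp add: algebra_simps)
  finally have "norm ((1/2) *\<^sub>R (u + v)) / D < 1" using \<open>D > 0\<close> by simp
  then show ?thesis using \<open>D > 0\<close> by (simp add: field_simps)
qed

lemma strictly_convex_eq_if_norm_combination:
  fixes u v :: "'b::real_normed_vector"
  assumes sc: "strictly_convex_space TYPE('b)"
    and u: "norm u \<le> D" and v: "norm v \<le> D"
    and eq: "norm (l *\<^sub>R u + (1 - l) *\<^sub>R v) = D" and l: "0 < l" "l < 1"
  shows "u = v"
proof (rule ccontr)
  assume ne: "u \<noteq> v"
  have "D \<le> l * norm u + (1 - l) * norm v"
    using eq norm_triangle_ineq[of "l *\<^sub>R u" "(1 - l) *\<^sub>R v"] l by simp
  moreover have "l * norm u \<le> l * D" "(1 - l) * norm v \<le> (1 - l) * D"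
    using u v l by (simp_all add: mult_left_mono)
  moreover have "l * D + (1 - l) * D = D" by (simp add: algebra_simps)
  ultimately have "l * norm u = l * D" "(1 - l) * norm v = (1 - l) * D"
    by linarith+
  then have "norm u = D" "norm v = D" using l by simp_all
  define m where "m = (1/2) *\<^sub>R (u + v)"
  have m: "norm m < D"
    unfolding m_def using strictly_convex_norm_midpoint_less[OF sc \<open>norm u = D\<close> \<open>norm v = D\<close> ne] .
  text \<open>Rewrite the combination through the midpoint \<open>m\<close> and the endpoint of larger weight.\<close>
  show False
  proof (cases "l \<ge> 1/2")
    case True
    have "l *\<^sub>R u + (1 - l) *\<^sub>R v = (2*l - 1) *\<^sub>R u + (2 - 2*l) *\<^sub>R m"
      unfolding m_def by (simp add: algebra_simps flip: scaleR_add_left)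
    then have "D \<le> norm ((2*l - 1) *\<^sub>R u) + norm ((2 - 2*l) *\<^sub>R m)"
      using eq norm_triangle_ineq by metis
    also have "\<dots> = (2*l - 1) * D + (2 - 2*l) * norm m" using True l \<open>norm u = D\<close> by simp
    also have "\<dots> < (2*l - 1) * D + (2 - 2*l) * D" using m l by simp
    finally show False by (simp add: algebra_simps)
  next
    case False
    have "l *\<^sub>R u + (1 - l) *\<^sub>R v = (1 - 2*l) *\<^sub>R v + (2*l) *\<^sub>R m"
      unfolding m_def by (simp add: algebra_simps flip: scaleR_add_left)
    then have "D \<le> norm ((1 - 2*l) *\<^sub>R v) + norm ((2*l) *\<^sub>R m)"
      using eq norm_triangle_ineq by metis
    also have "\<dots> = (1 - 2*l) * D + (2*l) * norm m" using False l \<open>norm v = D\<close> by simp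
    also have "\<dots> < (1 - 2*l) * D + (2*l) * D" using m l by simp
    finally show False by (simp add: algebra_simps)
  qed
qed

lemma Lip10_norm_diff_le: "y \<in> Lip10 n x \<Longrightarrow> i \<le> n \<Longrightarrow> j \<le> n \<Longrightarrow> norm (y i - y j) \<le> dist (x i) (x j)"
  unfolding Lip10_def by blast

lemma Lip10_combination_eq_on_tight_reachable:
  fixes y y1 y2 :: "nat \<Rightarrow> 'b::real_normed_vector"
  assumes sc: "strictly_convex_space TYPE('b)"
    and y1: "y1 \<in> Lip10 n x" and y2: "y2 \<in> Lip10 n x" and l: "0 < l" "l < 1"
    and y: "y = (\<lambda>i. l *\<^sub>R y1 i + (1 - l) *\<^sub>R y2 i)"
    and "tight_reachable n x y i"
  shows "y1 i = y i \<and> y2 i = y i"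
  using \<open>tight_reachable n x y i\<close>
proof (induction rule: tight_reachable.induct)
  case tight_reachable_0
  show ?case using y1 y2 y by (simp add: Lip10_def)
next
  case (tight_reachable_step a b)
  have "a \<le> n" using tight_reachable_step.hyps(1) by (rule tight_reachable_le)
  have "norm (y1 b - y1 a) \<le> dist (x a) (x b)" "norm (y2 b - y2 a) \<le> dist (x a) (x b)"
    using Lip10_norm_diff_le[OF y1 \<open>b \<le> n\<close> \<open>a \<le> n\<close>] Lip10_norm_diff_le[OF y2 \<open>b \<le> n\<close> \<open>a \<le> n\<close>]
    by (simp_all add: dist_commute)
  moreover have "l *\<^sub>R (y1 b - y1 a) + (1 - l) *\<^sub>R (y2 b - y2 a) = y b - y a"
    using y by (simp add: algebra_simps)
  ultimately have "y1 b - y1 a = y2 b - y2 a"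
    using strictly_convex_eq_if_norm_combination[OF sc _ _ _ l] tight_reachable_step.hyps(3)
    by simp
  then have "y1 b = y2 b" using tight_reachable_step.IH by simp
  then show ?case using y by (simp flip: scaleR_add_left)
qed

lemma E_set_subset_ext_pts:
  assumes "strictly_convex_space TYPE('b::real_normed_vector)"
  shows "E_set n x \<subseteq> ext_pts (Lip10 n x :: (nat \<Rightarrow> 'b) set)"
proof
  fix y :: "nat \<Rightarrow> 'b"
  assume "y \<in> E_set n x"
  then have y: "y \<in> Lip10 n x" and reach: "\<forall>i\<in>{1..n}. tight_reachable n x y i"
    by (auto simp: E_set_iff)
  have "y1 = y \<and> y2 = y"
    if y1: "y1 \<in> Lip10 n x" and y2: "y2 \<in> Lip10 n x" and l: "0 < l" "l < 1"
      and eq: "y = (\<lambda>i. l *\<^sub>R y1 i + (1 - l) *\<^sub>R y2 i)" for y1 y2 l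
  proof -
    have "y1 i = y i \<and> y2 i = y i" for i
    proof (cases "i \<le> n")
      case True
      then have "tight_reachable n x y i"
        using reach tight_reachable_0 by (cases "i = 0") auto
      then show ?thesis
        using Lip10_combination_eq_on_tight_reachable[OF assms y1 y2 l eq] by blast
    next
      case False
      then show ?thesis using y y1 y2 by (simp add: Lip10_def)
    qed
    then show ?thesis by auto
  qed
  then show "y \<in> ext_pts (Lip10 n x)"
    using y unfolding ext_pts_def by blast
qed

lemma Lip10_slack_across_tight_reachable:
  assumes "y \<in> Lip10 n x"
  obtains g where "g > 0"
    "\<And>j k. j \<le> n \<Longrightarrow> k \<le> n \<Longrightarrow> tight_reachable n x y j \<Longrightarrow> \<not> tight_reachable n x y k \<Longrightarrow>
       norm (y k - y j) + g \<le> dist (x j) (x k)"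
proof -
  define S where "S = {(j, k). j \<le> n \<and> k \<le> n \<and> tight_reachable n x y j \<and> \<not> tight_reachable n x y k}"
  define slack where "slack = (\<lambda>(j, k). dist (x j) (x k) - norm (y k - y j))"
  have "finite S"
    by (rule finite_subset[of _ "{..n} \<times> {..n}"]) (auto simp: S_def)
  have "slack p > 0" if "p \<in> S" for p
  proof -
    obtain j k where p: "p = (j, k)" and jk: "j \<le> n" "k \<le> n"
        "tight_reachable n x y j" "\<not> tight_reachable n x y k"
      using \<open>p \<in> S\<close> by (auto simp: S_def)
    have "norm (y k - y j) \<le> dist (x j) (x k)"
      using Lip10_norm_diff_le[OF assms jk(2,1)] by (simp add: dist_commute)
    moreover have "norm (y k - y j) \<noteq> dist (x j) (x k)"
      using jk tight_reachable_step by blast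
    ultimately show ?thesis by (simp add: p slack_def)
  qed
  text \<open>The extra element \<open>1\<close> keeps the minimum meaningful when \<open>S = {}\<close>.\<close>
  then have "Min (insert 1 (slack ` S)) > 0"
    using \<open>finite S\<close> by (subst Min_gr_iff) auto
  moreover have "Min (insert 1 (slack ` S)) \<le> slack p" if "p \<in> S" for p
    using \<open>finite S\<close> that by (intro Min_le) auto
  ultimately show thesis
    by (intro that[of "Min (insert 1 (slack ` S))"]) (force simp: S_def slack_def)+
qed

lemma Lip10_translate_not_tight_reachable:
  assumes y: "y \<in> Lip10 n x"
    and slack: "\<And>j k. j \<le> n \<Longrightarrow> k \<le> n \<Longrightarrow> tight_reachable n x y j \<Longrightarrow> \<not> tight_reachable n x y k \<Longrightarrow>
       norm (y k - y j) + g \<le> dist (x j) (x k)"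
    and w: "norm w \<le> g"
  shows "(\<lambda>k. y k + (if k \<le> n \<and> \<not> tight_reachable n x y k then w else 0)) \<in> Lip10 n x"
    (is "?y' \<in> _")
proof -
  have "norm (?y' i - ?y' j) \<le> dist (x i) (x j)" if ij: "i \<le> n" "j \<le> n" for i j
  proof -
    have base: "norm (y i - y j) \<le> dist (x i) (x j)" using Lip10_norm_diff_le[OF y ij] .
    consider "tight_reachable n x y i = tight_reachable n x y j"
      | "tight_reachable n x y i" "\<not> tight_reachable n x y j"
      | "\<not> tight_reachable n x y i" "tight_reachable n x y j" by blast
    then show ?thesis
    proof cases
      case 1
      then show ?thesis using base ij by (cases "tight_reachable n x y i") auto
    next
      case 2
      have "norm (?y' i - ?y' j) = norm ((y i - y j) - w)" using 2 ij by (simp add: algebra_simps)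
      also have "\<dots> \<le> norm (y j - y i) + g"
        using norm_triangle_ineq4[of "y i - y j" w] w by (simp add: norm_minus_commute)
      also have "\<dots> \<le> dist (x i) (x j)" using slack[OF ij 2] .
      finally show ?thesis .
    next
      case 3
      have "norm (?y' i - ?y' j) = norm ((y i - y j) + w)" using 3 ij by (simp add: algebra_simps)
      also have "\<dots> \<le> norm (y i - y j) + g"
        using norm_triangle_ineq[of "y i - y j" w] w by simp
      also have "\<dots> \<le> dist (x i) (x j)" using slack[OF ij(2,1) 3(2,1)] by (simp add: dist_commute)
      finally show ?thesis .
    qed
  qed
  then show ?thesis
    using y tight_reachable_0[of n x y] by (simp add: Lip10_def)
qed

lemma ext_pts_symmetric_perturbation_eq_0:
  assumes "y \<in> ext_pts C" "(\<lambda>k. y k + z k) \<in> C" "(\<lambda>k. y k - z k) \<in> C"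
  shows "z = (\<lambda>_. 0)"
proof -
  have ext: "\<forall>y1\<in>C. \<forall>y2\<in>C. \<forall>l::real. 0 < l \<and> l < 1 \<and>
      y = (\<lambda>i. l *\<^sub>R y1 i + (1 - l) *\<^sub>R y2 i) \<longrightarrow> y1 = y \<and> y2 = y"
    using assms(1) by (simp add: ext_pts_def)
  have "y = (\<lambda>k. (1/2::real) *\<^sub>R (y k + z k) + (1 - 1/2) *\<^sub>R (y k - z k))"
    by (simp add: fun_eq_iff algebra_simps flip: scaleR_2)
  then have "(\<lambda>k. y k + z k) = y"
    using ext[rule_format, OF assms(2,3), of "1/2"] by simp
  then show ?thesis by (simp add: fun_eq_iff)
qed

lemma ext_pts_subset_E_set:
  assumes "\<exists>v::'b::real_normed_vector. v \<noteq> 0"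
  shows "ext_pts (Lip10 n x :: (nat \<Rightarrow> 'b) set) \<subseteq> E_set n x"
proof
  fix y :: "nat \<Rightarrow> 'b"
  assume ext: "y \<in> ext_pts (Lip10 n x)"
  then have y: "y \<in> Lip10 n x" by (simp add: ext_pts_def)
  obtain g where g: "g > 0"
    "\<And>j k. j \<le> n \<Longrightarrow> k \<le> n \<Longrightarrow> tight_reachable n x y j \<Longrightarrow> \<not> tight_reachable n x y k \<Longrightarrow>
       norm (y k - y j) + g \<le> dist (x j) (x k)"
    using Lip10_slack_across_tight_reachable[OF y] by metis
  obtain v :: 'b where "v \<noteq> 0" using assms by blast
  define w where "w = (g / norm v) *\<^sub>R v"
  have "w \<noteq> 0" "norm w \<le> g" "norm (- w) \<le> g" using \<open>v \<noteq> 0\<close> \<open>g > 0\<close> by (auto simp: w_def)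
  define z where "z = (\<lambda>k. if k \<le> n \<and> \<not> tight_reachable n x y k then w else 0)"
  have plus: "(\<lambda>k. y k + z k) \<in> Lip10 n x"
    unfolding z_def
    by (rule Lip10_translate_not_tight_reachable[OF y g(2) \<open>norm w \<le> g\<close>])
  have minus_z: "(\<lambda>k. y k - z k) = (\<lambda>k. y k + (if k \<le> n \<and> \<not> tight_reachable n x y k then - w else 0))"
    by (simp add: z_def fun_eq_iff)
  have minus: "(\<lambda>k. y k - z k) \<in> Lip10 n x"
    by (subst minus_z) (rule Lip10_translate_not_tight_reachable[OF y g(2) \<open>norm (- w) \<le> g\<close>])
  have "z = (\<lambda>_. 0)" using ext_pts_symmetric_perturbation_eq_0[OF ext plus minus] .
  then have "tight_reachable n x y i" if "i \<le> n" for i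
    using that \<open>w \<noteq> 0\<close> by (auto simp: z_def fun_eq_iff split: if_splits)
  then show "y \<in> E_set n x" using y by (simp add: E_set_iff)
qed

theorem theorem1:
  fixes n :: nat and x :: "nat \<Rightarrow> 'a::metric_space"
  assumes "n \<ge> 1"
    and "inj_on x {0..n}"
    and "\<exists>v::'b::banach. v \<noteq> 0"
    and "strictly_convex_space TYPE('b)"
  shows "ext_pts (Lip10 n x :: (nat \<Rightarrow> 'b) set) = E_set n x"
  using ext_pts_subset_E_set[OF assms(3)] E_set_subset_ext_pts[OF assms(4)] by (rule antisym)

end
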